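(* Consider the discrete-time fractional-order system $\Delta^{\alpha}x[k+1]=Ax[k]+Bu[k]$ with $x[k]\in\mathbb{R}^n$, $u[k]\in\mathbb{R}^p$, and fix $K\ge1$. For $S\subseteq[n]=\{1,\dots,n\}$ let $\mathbb{I}^S$ be the matrix formed by the rows of $I_n$ indexed by $S$, and let $f(S)=\operatorname{rank}([\Theta\ \ \Xi])$ where $\Theta,\Xi$ are constructed as in the context with $C=\mathbb{I}^S$. Then $f:2^{[n]}\to\mathbb{R}$ is submodular, i.e., $f(S\cup T)+f(S\cap T)\le f(S)+f(T)$ for all $S,T\subseteq[n]$.
   Context: $\psi(\alpha_i,j)=\frac{\Gamma(j-\alpha_i)}{\Gamma(-\alpha_i)\Gamma(j+1)}$ and $\Delta^{\alpha_i}x_i[k]=\sum_{j=0}^{k}\psi(\alpha_i,j)x_i[k-j]$. $D(\alpha,j)=\operatorname{diag}(\psi(\alpha_1,j),\dots,\psi(\alpha_n,j))$, $A_0=A-D(\alpha,1)$, $A_j=-D(\alpha,j+1)$ for $j\ge1$, $G_0=I_n$, $G_k=\sum_{j=0}^{k-1}A_jG_{k-1-j}$. $\Theta=[(CG_0)^T,\dots,(CG_{K-1})^T]^T$ and $\Xi$ is the $K\times K$ block lower-triangular matrix whose $(r,s)$ block is $CG_{r-s-1}B$ for $r>s$ and $0$ otherwise. *)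

theory Defs
  imports "HOL-Analysis.Gamma_Function" "Jordan_Normal_Form.DL_Rank" "Jordan_Normal_Form.DL_Submatrix"
begin

definition psi :: "real \<Rightarrow> nat \<Rightarrow> real" where
  "psi a j = Gamma (real j - a) / (Gamma (- a) * Gamma (real j + 1))"

definition frac_diff :: "real \<Rightarrow> (nat \<Rightarrow> real) \<Rightarrow> nat \<Rightarrow> real" where
  "frac_diff a x k = (\<Sum>j = 0..k. psi a j * x (k - j))"

text \<open>D(alpha, j) = diag(psi(alpha_1, j), ..., psi(alpha_n, j)); indices are 0-based.\<close>
definition Dmat :: "nat \<Rightarrow> (nat \<Rightarrow> real) \<Rightarrow> nat \<Rightarrow> real mat" where
  "Dmat n alpha j = mat n n (\<lambda>(i, l). if i = l then psi (alpha i) j else 0)"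

definition Aj :: "nat \<Rightarrow> real mat \<Rightarrow> (nat \<Rightarrow> real) \<Rightarrow> nat \<Rightarrow> real mat" where
  "Aj n A alpha j = (if j = 0 then A - Dmat n alpha 1 else - Dmat n alpha (j + 1))"

fun Glist :: "nat \<Rightarrow> real mat \<Rightarrow> (nat \<Rightarrow> real) \<Rightarrow> nat \<Rightarrow> real mat list" where
  "Glist n A alpha 0 = [1\<^sub>m n]"
| "Glist n A alpha (Suc k) = Glist n A alpha k @
     [foldr (+) (map (\<lambda>j. Aj n A alpha j * (Glist n A alpha k ! (k - j))) [0..<Suc k]) (0\<^sub>m n n)]"

definition Gmat :: "nat \<Rightarrow> real mat \<Rightarrow> (nat \<Rightarrow> real) \<Rightarrow> nat \<Rightarrow> real mat" where
  "Gmat n A alpha k = Glist n A alpha k ! k"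

text \<open>Theta = [C G_0; ...; C G_{K-1}] (C has m rows, G_k is n x n).\<close>
definition Theta :: "nat \<Rightarrow> real mat \<Rightarrow> (nat \<Rightarrow> real) \<Rightarrow> real mat \<Rightarrow> nat \<Rightarrow> real mat" where
  "Theta n A alpha C K = mat (K * dim_row C) n
     (\<lambda>(i, l). (C * Gmat n A alpha (i div dim_row C)) $$ (i mod dim_row C, l))"

text \<open>Xi: K x K block lower triangular, block (r,s) = C G_{r-s-1} B if r > s, else 0.\<close>
definition Xi :: "nat \<Rightarrow> real mat \<Rightarrow> real mat \<Rightarrow> (nat \<Rightarrow> real) \<Rightarrow> real mat \<Rightarrow> nat \<Rightarrow> real mat" where
  "Xi n A B alpha C K = mat (K * dim_row C) (K * dim_col B)
     (\<lambda>(i, l). let r = i div dim_row C; s = l div dim_col B in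
        if s < r then (C * Gmat n A alpha (r - s - 1) * B) $$ (i mod dim_row C, l mod dim_col B)
        else 0)"

definition hcat :: "real mat \<Rightarrow> real mat \<Rightarrow> real mat" where
  "hcat M N = mat (dim_row M) (dim_col M + dim_col N)
     (\<lambda>(i, l). if l < dim_col M then M $$ (i, l) else N $$ (i, l - dim_col M))"

definition mat_rank :: "real mat \<Rightarrow> nat" where
  "mat_rank M = vec_space.rank (dim_row M) M"

definition selector :: "nat \<Rightarrow> nat set \<Rightarrow> real mat" where
  "selector n S = submatrix (1\<^sub>m n) S UNIV"

definition f_rank :: "nat \<Rightarrow> real mat \<Rightarrow> real mat \<Rightarrow> (nat \<Rightarrow> real) \<Rightarrow> nat \<Rightarrow> nat set \<Rightarrow> real" where
  "f_rank n A B alpha K S =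
     real (mat_rank (hcat (Theta n A alpha (selector n S) K) (Xi n A B alpha (selector n S) K)))"

end

theory Submission
  imports Defs "Jordan_Normal_Form.DL_Rank_Submatrix"
begin

text \<open>With \<open>C\<close> the row selector of \<open>S\<close>, the rows of \<open>[\<Theta> \<Xi>]\<close> are the vectors
  \<open>w r j\<close> with \<open>r < K\<close> and \<open>j \<in> S\<close>, where \<open>w r j\<close> is row \<open>j\<close> of the \<open>r\<close>-th block row
  of \<open>[\<Theta> \<Xi>]\<close> for \<open>C = I\<^sub>n\<close>. As the rank of a matrix is the dimension of the span of
  its rows, \<open>f S\<close> is the rank of the subfamily of the fixed family \<open>w\<close> indexed by
  \<open>{..<K} \<times> S\<close>; this rank function of a linear matroid is submodular.\<close>

context vectorspace
begin

lemma lin_indpt_empty: "lin_indpt {}"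
  by (simp add: lin_dep_def)

lemma maximal_indpt_subset_exists:
  assumes "X \<subseteq> carrier V" "finite X"
  obtains M where "maximal M (\<lambda>T. T \<subseteq> X \<and> lin_indpt T)"
  using maximal_exists_superset[of X "\<lambda>T. T \<subseteq> X \<and> lin_indpt T" "{}"] assms lin_indpt_empty
  by blast

lemma maximal_indpt_subset_spans:
  assumes X: "X \<subseteq> carrier V" and M: "maximal M (\<lambda>T. T \<subseteq> X \<and> lin_indpt T)"
  shows "X \<subseteq> span M"
proof
  fix x assume x: "x \<in> X"
  have MX: "M \<subseteq> X" and li: "lin_indpt M" using M unfolding maximal_def by auto
  show "x \<in> span M"
  proof (rule ccontr)
    assume nin: "x \<notin> span M"
    then have "x \<notin> M" using in_own_span MX X by blast
    moreover have "lin_indpt (M \<union> {x})"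
      using lin_dep_iff_in_span[of M x] MX X x li nin \<open>x \<notin> M\<close> by auto
    ultimately show False using M MX x unfolding maximal_def by blast
  qed
qed

lemma card_le_dim_span:
  assumes X: "X \<subseteq> carrier V" "finite X" and U: "U \<subseteq> X" "lin_indpt U"
  shows "card U \<le> vectorspace.dim K (span_vs X)"
proof -
  obtain M where "finite M" "maximal M (\<lambda>T. T \<subseteq> X \<and> lin_indpt T)" "U \<subseteq> M"
    using maximal_exists_superset[of X "\<lambda>T. T \<subseteq> X \<and> lin_indpt T" U] X U by blast
  then show ?thesis using dim_span[OF X] card_mono by metis
qed

lemma dim_span_mono:
  assumes X: "X \<subseteq> carrier V" "finite X" and "Z \<subseteq> X"
  shows "vectorspace.dim K (span_vs Z) \<le> vectorspace.dim K (span_vs X)"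
proof -
  have Z: "Z \<subseteq> carrier V" "finite Z" using assms finite_subset by auto
  obtain M where M: "maximal M (\<lambda>T. T \<subseteq> Z \<and> lin_indpt T)"
    using maximal_indpt_subset_exists[OF Z] .
  then have "M \<subseteq> X" "lin_indpt M" using \<open>Z \<subseteq> X\<close> unfolding maximal_def by auto
  then show ?thesis using card_le_dim_span[OF X] dim_span[OF Z M] by simp
qed

lemma dim_span_le_card_spanning:
  assumes X: "X \<subseteq> carrier V" "finite X" and Z: "Z \<subseteq> carrier V" "finite Z"
    and "X \<subseteq> span Z"
  shows "vectorspace.dim K (span_vs X) \<le> card Z"
proof -
  obtain M where M: "maximal M (\<lambda>T. T \<subseteq> X \<and> lin_indpt T)"
    using maximal_indpt_subset_exists[OF X] .
  then have "M \<subseteq> span Z" "lin_indpt M" "finite M"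
    using \<open>X \<subseteq> span Z\<close> X(2) finite_subset unfolding maximal_def by auto
  then have "card M \<le> card Z" using replacement[OF \<open>finite M\<close> Z(2,1)] by force
  then show ?thesis using dim_span[OF X M] by simp
qed

text \<open>Extend a basis of the intersection to a basis of the union; its traces on
  \<open>X\<close> and \<open>Y\<close> are independent and overlap exactly in the basis of the intersection.\<close>
lemma dim_span_submodular:
  assumes X: "X \<subseteq> carrier V" "finite X" and Y: "Y \<subseteq> carrier V" "finite Y"
  shows "vectorspace.dim K (span_vs (X \<union> Y)) + vectorspace.dim K (span_vs (X \<inter> Y))
     \<le> vectorspace.dim K (span_vs X) + vectorspace.dim K (span_vs Y)"
proof -
  have XY: "X \<inter> Y \<subseteq> carrier V" "finite (X \<inter> Y)" and UXY: "X \<union> Y \<subseteq> carrier V" "finite (X \<union> Y)"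
    using X Y by auto
  obtain I where I: "maximal I (\<lambda>T. T \<subseteq> X \<inter> Y \<and> lin_indpt T)"
    using maximal_indpt_subset_exists[OF XY] .
  then have "I \<subseteq> X \<inter> Y" "lin_indpt I" unfolding maximal_def by auto
  then obtain J where "finite J" and J: "maximal J (\<lambda>T. T \<subseteq> X \<union> Y \<and> lin_indpt T)" "I \<subseteq> J"
    using maximal_exists_superset[of "X \<union> Y" "\<lambda>T. T \<subseteq> X \<union> Y \<and> lin_indpt T" I] UXY by blast
  have "J \<subseteq> X \<union> Y" "lin_indpt J" using J(1) unfolding maximal_def by auto
  have "J \<inter> (X \<inter> Y) = I"
  proof -
    have "J \<inter> (X \<inter> Y) \<subseteq> X \<inter> Y \<and> lin_indpt (J \<inter> (X \<inter> Y))"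
      using \<open>lin_indpt J\<close> subset_li_is_li by blast
    moreover have "I \<subseteq> J \<inter> (X \<inter> Y)" using J(2) \<open>I \<subseteq> X \<inter> Y\<close> by auto
    ultimately show ?thesis using I unfolding maximal_def by blast
  qed
  have "J \<inter> X \<union> J \<inter> Y = J" "J \<inter> X \<inter> (J \<inter> Y) = I"
    using \<open>J \<subseteq> X \<union> Y\<close> \<open>J \<inter> (X \<inter> Y) = I\<close> by blast+
  then have "card J + card I = card (J \<inter> X) + card (J \<inter> Y)"
    using card_Un_Int[of "J \<inter> X" "J \<inter> Y"] \<open>finite J\<close> by simp
  also have "\<dots> \<le> vectorspace.dim K (span_vs X) + vectorspace.dim K (span_vs Y)"
    using card_le_dim_span[OF X, of "J \<inter> X"] card_le_dim_span[OF Y, of "J \<inter> Y"]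
      \<open>lin_indpt J\<close> subset_li_is_li by (meson add_mono inf_le1 inf_le2)
  finally show ?thesis using dim_span[OF UXY J(1)] dim_span[OF XY I] by simp
qed

lemma dim_span_image_submodular:
  assumes "finite I" "finite J" and v: "v ` (I \<union> J) \<subseteq> carrier V"
  shows "vectorspace.dim K (span_vs (v ` (I \<union> J))) + vectorspace.dim K (span_vs (v ` (I \<inter> J)))
     \<le> vectorspace.dim K (span_vs (v ` I)) + vectorspace.dim K (span_vs (v ` J))"
proof -
  have "v ` I \<subseteq> carrier V" "v ` J \<subseteq> carrier V" using v by auto
  then have "vectorspace.dim K (span_vs (v ` (I \<inter> J))) \<le> vectorspace.dim K (span_vs (v ` I \<inter> v ` J))"
    using dim_span_mono[of "v ` I \<inter> v ` J" "v ` (I \<inter> J)"] assms by auto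
  then show ?thesis
    using dim_span_submodular[of "v ` I" "v ` J"] \<open>v ` I \<subseteq> carrier V\<close> \<open>v ` J \<subseteq> carrier V\<close> assms
    by (simp add: image_Un)
qed

end

context vec_space
begin

lemma factor_through_col_space:
  assumes A: "A \<in> carrier_mat n nc" and C: "C \<in> carrier_mat n r"
    and "set (cols A) \<subseteq> col_space C"
  obtains Y where "Y \<in> carrier_mat r nc" "A = C * Y"
proof -
  have "\<exists>y \<in> carrier_vec r. C *\<^sub>v y = col A j" if "j < nc" for j
  proof -
    have "col A j \<in> col_space C" using assms(3) A that by (auto simp: cols_def)
    then show ?thesis using col_space_eq[OF C] C by auto
  qed
  then obtain y where y: "\<And>j. j < nc \<Longrightarrow> y j \<in> carrier_vec r \<and> C *\<^sub>v y j = col A j"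
    by metis
  let ?Y = "mat_of_cols r (map y [0..<nc])"
  have Y: "?Y \<in> carrier_mat r nc" using mat_of_cols_carrier(1)[of r "map y [0..<nc]"] by simp
  have "A = C * ?Y"
  proof (rule eq_matI)
    fix i j assume "i < dim_row (C * ?Y)" "j < dim_col (C * ?Y)"
    then have ij: "i < n" "j < nc" using C by auto
    have "col ?Y j = y j" using ij y by (simp add: col_mat_of_cols)
    then have "(C * ?Y) $$ (i, j) = (C *\<^sub>v y j) $ i" using C ij by simp
    then show "A $$ (i, j) = (C * ?Y) $$ (i, j)" using y[OF ij(2)] A ij by simp
  qed (use A C in auto)
  then show ?thesis using that Y by blast
qed

lemma set_rows_mult_subset_row_space:
  assumes C: "C \<in> carrier_mat m r" and Y: "Y \<in> carrier_mat r n"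
  shows "set (rows (C * Y)) \<subseteq> row_space Y"
proof
  fix v assume "v \<in> set (rows (C * Y))"
  then obtain i where i: "i < m" and v: "v = row (C * Y) i" using C by (auto simp: rows_def)
  have "v = Y\<^sup>T *\<^sub>v row C i"
  proof (rule eq_vecI)
    fix j assume "j < dim_vec (Y\<^sup>T *\<^sub>v row C i)"
    then have j: "j < n" using Y by simp
    have "row C i \<bullet> col Y j = col Y j \<bullet> row C i"
      using C Y i j by (intro comm_scalar_prod[of _ r]) auto
    then show "v $ j = (Y\<^sup>T *\<^sub>v row C i) $ j" using C Y i j v by simp
  qed (use C Y v in simp)
  then show "v \<in> row_space Y" using row_space_eq[OF Y] C Y i by auto
qed

text \<open>\<open>A = C Y\<close> for a column basis \<open>C\<close> of \<open>A\<close>, so the rows of \<open>A\<close> lie in the span of the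
  \<open>rank A\<close> rows of \<open>Y\<close>.\<close>
lemma dim_span_rows_le_rank:
  assumes A: "A \<in> carrier_mat m n"
  shows "vectorspace.dim class_ring (span_vs (set (rows A))) \<le> vec_space.rank m A"
proof -
  interpret M: vec_space "TYPE('a)" m .
  have cols: "set (cols A) \<subseteq> carrier_vec m" using A cols_dim by blast
  obtain U where U: "maximal U (\<lambda>T. T \<subseteq> set (cols A) \<and> M.lin_indpt T)"
    using M.maximal_indpt_subset_exists[OF cols] by blast
  then have "U \<subseteq> carrier_vec m" "finite U" using cols unfolding maximal_def by (auto intro: finite_subset)
  then obtain us where us: "set us = U" "distinct us" using finite_distinct_list by blast
  let ?C = "mat_of_cols m us"
  have C: "?C \<in> carrier_mat m (length us)" by simp
  have "set (cols A) \<subseteq> M.col_space ?C"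
    using M.maximal_indpt_subset_spans[OF cols U] us \<open>U \<subseteq> carrier_vec m\<close>
    by (simp add: M.col_space_def cols_mat_of_cols)
  then obtain Y where Y: "Y \<in> carrier_mat (length us) n" and AY: "A = ?C * Y"
    using M.factor_through_col_space[OF A C] by blast
  have "set (rows A) \<subseteq> span (set (rows Y))"
    using set_rows_mult_subset_row_space[OF C Y] AY by (simp add: row_space_def)
  then have "vectorspace.dim class_ring (span_vs (set (rows A))) \<le> card (set (rows Y))"
    using dim_span_le_card_spanning rows_carrier[of A] rows_carrier[of Y] A Y by simp
  also have "\<dots> \<le> length us" using Y card_length[of "rows Y"] by simp
  also have "\<dots> = vec_space.rank m A"
    using M.rank_card_indpt[OF A U] us distinct_card by metis
  finally show ?thesis .
qed

lemma rank_eq_dim_span_rows: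
  assumes A: "A \<in> carrier_mat m n"
  shows "vec_space.rank m A = vectorspace.dim class_ring (span_vs (set (rows A)))"
proof -
  interpret M: vec_space "TYPE('a)" m .
  have "M.rank A = vectorspace.dim class_ring (M.span_vs (set (rows A\<^sup>T)))"
    unfolding M.rank_def by simp
  also have "\<dots> \<le> rank A\<^sup>T" using M.dim_span_rows_le_rank[of "A\<^sup>T" n] A by simp
  also have "\<dots> = vectorspace.dim class_ring (span_vs (set (rows A)))"
    unfolding rank_def by simp
  finally show ?thesis using dim_span_rows_le_rank[OF A] by simp
qed

end

lemma Glist_carrier:
  assumes A: "A \<in> carrier_mat n n"
  shows "length (Glist n A alpha k) = Suc k \<and> set (Glist n A alpha k) \<subseteq> carrier_mat n n"
proof (induction k)
  case (Suc k)
  have Aj: "Aj n A alpha j \<in> carrier_mat n n" for j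
    using A unfolding Aj_def Dmat_def by auto
  have "foldr (+) (map (\<lambda>j. Aj n A alpha j * (Glist n A alpha k ! (k - j))) xs) (0\<^sub>m n n)
        \<in> carrier_mat n n" if "set xs \<subseteq> {0..<Suc k}" for xs
    using that Suc Aj by (induction xs) (auto intro!: add_carrier_mat mult_carrier_mat)
  from this[of "[0..<Suc k]"] show ?case using Suc by (simp del: upt_Suc)
qed simp

lemma Gmat_carrier:
  assumes "A \<in> carrier_mat n n"
  shows "Gmat n A alpha k \<in> carrier_mat n n"
  using Glist_carrier[OF assms, of alpha k] unfolding Gmat_def by auto

lemma selector_carrier:
  assumes "S \<subseteq> {0..<n}"
  shows "selector n S \<in> carrier_mat (card S) n"
proof -
  have "{i. i < n \<and> i \<in> S} = S" "{j. j < n \<and> j \<in> (UNIV :: nat set)} = {0..<n}" using assms by auto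
  then show ?thesis unfolding selector_def carrier_mat_def by (simp add: dim_submatrix)
qed

lemma selector_mult_entry:
  assumes S: "S \<subseteq> {0..<n}" and M: "M \<in> carrier_mat n q" and t: "t < card S" and l: "l < q"
  shows "(selector n S * M) $$ (t, l) = M $$ (pick S t, l)"
proof -
  have "{i. i < dim_row (1\<^sub>m n :: real mat) \<and> i \<in> S} = S" using S by auto
  then have t': "t < card {i. i < dim_row (1\<^sub>m n :: real mat) \<and> i \<in> S}" using t by simp
  then have pk: "pick S t < n" using pick_le[of t n S] by simp
  have "(selector n S * M) $$ (t, l) = row (1\<^sub>m n) (pick S t) \<bullet> col M l"
    using selector_carrier[OF S] M t l row_submatrix_UNIV[OF t'] by (simp add: selector_def)
  also have "\<dots> = M $$ (pick S t, l)" using M pk l by simp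
  finally show ?thesis .
qed

text \<open>Row \<open>j\<close> of \<open>[G\<^sub>r, G\<^bsub>r-1\<^esub>B, \<dots>, G\<^sub>0B, 0, \<dots>, 0]\<close>, the \<open>r\<close>-th block row of \<open>[\<Theta> \<Xi>]\<close> for \<open>C = I\<^sub>n\<close>.\<close>
definition output_row :: "nat \<Rightarrow> real mat \<Rightarrow> real mat \<Rightarrow> (nat \<Rightarrow> real) \<Rightarrow> nat \<Rightarrow> nat \<Rightarrow> nat \<Rightarrow> real vec" where
  "output_row n A B alpha K r j = vec (n + K * dim_col B) (\<lambda>l.
     if l < n then Gmat n A alpha r $$ (j, l)
     else if (l - n) div dim_col B < r
       then (Gmat n A alpha (r - (l - n) div dim_col B - 1) * B) $$ (j, (l - n) mod dim_col B)
     else 0)"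

lemma hcat_Theta_Xi_carrier:
  assumes "B \<in> carrier_mat n p" and "S \<subseteq> {0..<n}"
  shows "hcat (Theta n A alpha (selector n S) K) (Xi n A B alpha (selector n S) K)
    \<in> carrier_mat (K * card S) (n + K * p)"
  using selector_carrier[OF assms(2)] assms(1) unfolding hcat_def Theta_def Xi_def by auto

lemma row_hcat_Theta_Xi:
  assumes A: "A \<in> carrier_mat n n" and B: "B \<in> carrier_mat n p" and S: "S \<subseteq> {0..<n}"
    and i: "i < K * card S"
  shows "row (hcat (Theta n A alpha (selector n S) K) (Xi n A B alpha (selector n S) K)) i
       = output_row n A B alpha K (i div card S) (pick S (i mod card S))"
    (is "row ?M i = output_row n A B alpha K ?r ?j")
proof (rule eq_vecI)
  let ?C = "selector n S"
  have C: "?C \<in> carrier_mat (card S) n" using selector_carrier[OF S] .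
  have M: "?M \<in> carrier_mat (K * card S) (n + K * p)" using hcat_Theta_Xi_carrier[OF B S] .
  have t: "i mod card S < card S" using i by (cases "card S = 0") auto
  show dim: "dim_vec (row ?M i) = dim_vec (output_row n A B alpha K ?r ?j)"
    using M B unfolding output_row_def by simp
  fix l assume "l < dim_vec (output_row n A B alpha K ?r ?j)"
  then have l: "l < n + K * p" using B unfolding output_row_def by simp
  show "row ?M i $ l = output_row n A B alpha K ?r ?j $ l"
  proof (cases "l < n")
    case True
    have "row ?M i $ l = (?C * Gmat n A alpha ?r) $$ (i mod card S, l)"
      using M C i True unfolding hcat_def Theta_def by simp
    also have "\<dots> = Gmat n A alpha ?r $$ (?j, l)"
      using selector_mult_entry[OF S Gmat_carrier[OF A] t True] .
    finally show ?thesis using B l True unfolding output_row_def by simp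
  next
    case False
    let ?s = "(l - n) div p"
    let ?G = "Gmat n A alpha (?r - ?s - 1)"
    have "l - n < K * p" using l False by simp
    then have lp: "(l - n) mod p < p" by (cases "p = 0") auto
    have GB: "?G * B \<in> carrier_mat n p" using mult_carrier_mat[OF Gmat_carrier[OF A] B] .
    have "?C * ?G * B = ?C * (?G * B)" using assoc_mult_mat[OF C Gmat_carrier[OF A] B] .
    then have "row ?M i $ l = (if ?s < ?r then (?C * (?G * B)) $$ (i mod card S, (l - n) mod p) else 0)"
      using M C B i l False unfolding hcat_def Theta_def Xi_def Let_def by simp
    also have "\<dots> = (if ?s < ?r then (?G * B) $$ (?j, (l - n) mod p) else 0)"
      using selector_mult_entry[OF S GB t lp] by simp
    finally show ?thesis using B l False unfolding output_row_def by simp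
  qed
qed

lemma set_rows_hcat_Theta_Xi:
  assumes A: "A \<in> carrier_mat n n" and B: "B \<in> carrier_mat n p" and S: "S \<subseteq> {0..<n}"
  shows "set (rows (hcat (Theta n A alpha (selector n S) K) (Xi n A B alpha (selector n S) K)))
       = (\<lambda>(r, j). output_row n A B alpha K r j) ` ({..<K} \<times> S)"
    (is "set (rows ?M) = ?W")
proof -
  have "dim_row ?M = K * card S" using hcat_Theta_Xi_carrier[OF B S] by blast
  then have rows: "set (rows ?M) = row ?M ` {..<K * card S}" unfolding rows_def by auto
  have "finite S" using S finite_subset by blast
  have "set (rows ?M) \<subseteq> ?W"
  proof
    fix v assume "v \<in> set (rows ?M)"
    then obtain i where i: "i < K * card S" and v: "v = row ?M i" unfolding rows by blast
    have "card S > 0" using i by (cases "card S = 0") auto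
    then have "(i div card S, pick S (i mod card S)) \<in> {..<K} \<times> S"
      using i pick_in_set_le by (simp add: less_mult_imp_div_less)
    then show "v \<in> ?W" using row_hcat_Theta_Xi[OF A B S i] v by force
  qed
  moreover have "?W \<subseteq> set (rows ?M)"
  proof
    fix v assume "v \<in> ?W"
    then obtain r j where rj: "r < K" "j \<in> S" and v: "v = output_row n A B alpha K r j" by auto
    define t where "t = card {a \<in> S. a < j}"
    have "{a \<in> S. a < j} \<subset> S" using rj(2) by auto
    then have t: "t < card S" unfolding t_def using psubset_card_mono[OF \<open>finite S\<close>] by blast
    have "r * card S + t < Suc r * card S" using t by simp
    also have "\<dots> \<le> K * card S" using rj(1) by (intro mult_right_mono) auto
    finally have i: "r * card S + t < K * card S" .
    have "pick S t = j" unfolding t_def using pick_card_in_set[OF rj(2)] .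
    then have "row ?M (r * card S + t) = v" using row_hcat_Theta_Xi[OF A B S i] t v by simp
    then show "v \<in> set (rows ?M)" using i unfolding rows by blast
  qed
  ultimately show ?thesis by (rule equalityI)
qed

lemma f_rank_eq_dim_span_output_rows:
  assumes A: "A \<in> carrier_mat n n" and B: "B \<in> carrier_mat n p" and S: "S \<subseteq> {0..<n}"
  shows "f_rank n A B alpha K S = real (vectorspace.dim class_ring
    (module.span_vs class_ring (module_vec TYPE(real) (n + K * p))
      ((\<lambda>(r, j). output_row n A B alpha K r j) ` ({..<K} \<times> S))))"
proof -
  interpret V: vec_space "TYPE(real)" "n + K * p" .
  let ?M = "hcat (Theta n A alpha (selector n S) K) (Xi n A B alpha (selector n S) K)"
  have M: "?M \<in> carrier_mat (K * card S) (n + K * p)" using hcat_Theta_Xi_carrier[OF B S] .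
  show ?thesis
    unfolding f_rank_def mat_rank_def V.rank_eq_dim_span_rows[OF M, symmetric]
      set_rows_hcat_Theta_Xi[OF A B S, symmetric] using M by simp
qed

theorem theorem2:
  fixes n p K :: nat and A B :: "real mat" and alpha :: "nat \<Rightarrow> real" and S T :: "nat set"
  assumes "A \<in> carrier_mat n n" and "B \<in> carrier_mat n p" and "K \<ge> 1"
    and "S \<subseteq> {0..<n}" and "T \<subseteq> {0..<n}"
  shows "f_rank n A B alpha K (S \<union> T) + f_rank n A B alpha K (S \<inter> T)
           \<le> f_rank n A B alpha K S + f_rank n A B alpha K T"
proof -
  interpret V: vec_space "TYPE(real)" "n + K * p" .
  let ?v = "\<lambda>(r, j). output_row n A B alpha K r j"
  let ?rk = "\<lambda>U. vectorspace.dim class_ring (V.span_vs (?v ` ({..<K} \<times> U)))"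
  have f_rank: "f_rank n A B alpha K U = real (?rk U)" if "U \<subseteq> {0..<n}" for U
    using f_rank_eq_dim_span_output_rows[OF assms(1,2) that] .
  have "finite S" "finite T" using assms(4,5) finite_subset by auto
  moreover have "?v ` ({..<K} \<times> S \<union> {..<K} \<times> T) \<subseteq> carrier_vec (n + K * p)"
    using assms(2) by (auto simp: output_row_def)
  ultimately have "?rk (S \<union> T) + ?rk (S \<inter> T) \<le> ?rk S + ?rk T"
    using V.dim_span_image_submodular[of "{..<K} \<times> S" "{..<K} \<times> T" ?v]
    by (simp add: Sigma_Un_distrib2 Sigma_Int_distrib2)
  then show ?thesis using f_rank assms(4,5) by (simp add: le_infI1 le_supI)
qed

end
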